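(* Let $(X,d)$ be a complete metric space and $I:X\to(-\infty,0]$ a function of Baire class 1. Let $X_0$ be a nonempty dense subset of $X$ with the following property: for every $\beta<0$ there exists $\alpha(\beta)>0$ such that for every $x\in X_0$ with $I(x)<\beta$ there exists a sequence $\{x_n\}\subseteq X_0$ with $x_n\to x$ in $(X,d)$ and $\liminf_{n\to\infty}I(x_n)\ge I(x)+\alpha(\beta)$. Then there exists a residual set $S\subseteq X$ such that $I(x)=0$ for all $x\in S$.
   Context: A function is of Baire class 1 if it is a pointwise limit of a sequence of continuous functions. A set is residual if its complement is of first category (a countable union of nowhere dense sets). *)

theory Defs
  imports "HOL-Analysis.Analysis"
begin

definition baire_class_1 :: "('a::topological_space \<Rightarrow> real) \<Rightarrow> bool" where
  "baire_class_1 f \<longleftrightarrow>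
     (\<exists>g :: nat \<Rightarrow> 'a \<Rightarrow> real. (\<forall>n. continuous_on UNIV (g n)) \<and>
        (\<forall>x. (\<lambda>n. g n x) \<longlonglongrightarrow> f x))"

definition nowhere_dense :: "'a::topological_space set \<Rightarrow> bool" where
  "nowhere_dense A \<longleftrightarrow> interior (closure A) = {}"

definition first_category :: "'a::topological_space set \<Rightarrow> bool" where
  "first_category A \<longleftrightarrow> (\<exists>F :: nat \<Rightarrow> 'a set. (\<forall>n. nowhere_dense (F n)) \<and> A = (\<Union>n. F n))"

definition residual :: "'a::topological_space set \<Rightarrow> bool" where
  "residual S \<longleftrightarrow> first_category (UNIV - S)"

end

theory Submission
  imports Defs
begin

text \<open>A Baire class 1 function is continuous at every point of a residual set (the sets where the
  approximating sequence has settled to within \<open>1/(k+1)\<close> after time \<open>N\<close> are closed, and their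
  boundaries are nowhere dense).  At a continuity point \<open>x\<close> with \<open>I x < 0\<close>, pick \<open>y \<in> X\<^sub>0\<close> close
  to \<open>x\<close>; the sequence in \<open>X\<^sub>0\<close> converging to \<open>y\<close> along which \<open>I\<close> jumps up by \<open>\<alpha>\<close> eventually
  stays where \<open>I\<close> is within \<open>\<alpha>/2\<close> of \<open>I x\<close>, which is impossible.\<close>

lemma nowhere_dense_closed_diff_interior:
  assumes "closed F"
  shows "nowhere_dense (F - interior F)"
  unfolding nowhere_dense_def
proof (rule ccontr)
  let ?W = "interior (closure (F - interior F))"
  assume "?W \<noteq> {}"
  have "closure (F - interior F) \<subseteq> F"
    using assms by (simp add: closure_minimal)
  hence "?W \<subseteq> interior F"
    by (meson interior_maximal interior_subset open_interior order_trans)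
  moreover have "?W \<inter> (F - interior F) \<noteq> {}"
    using \<open>?W \<noteq> {}\<close> open_Int_closure_eq_empty[of ?W "F - interior F"] interior_subset
    by (metis inf.absorb1 open_interior)
  ultimately show False by blast
qed

lemma first_category_UN_pairs:
  fixes A :: "nat \<Rightarrow> nat \<Rightarrow> 'a::topological_space set"
  assumes "\<And>k N. nowhere_dense (A k N)"
  shows "first_category (\<Union>k. \<Union>N. A k N)"
  unfolding first_category_def
proof (intro exI conjI allI)
  show "nowhere_dense (case_prod A (prod_decode p))" for p
    using assms by (cases "prod_decode p") simp
  show "(\<Union>k. \<Union>N. A k N) = (\<Union>p. case_prod A (prod_decode p))"
    by (auto intro!: exI[of _ "prod_encode (_, _)"])
qed

definition cauchy_tail_set :: "(nat \<Rightarrow> 'a \<Rightarrow> real) \<Rightarrow> real \<Rightarrow> nat \<Rightarrow> 'a set" where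
  "cauchy_tail_set g \<epsilon> N = {x. \<forall>m\<ge>N. \<forall>n\<ge>N. \<bar>g m x - g n x\<bar> \<le> \<epsilon>}"

lemma closed_cauchy_tail_set:
  assumes "\<And>n. continuous_on UNIV (g n)"
  shows "closed (cauchy_tail_set g \<epsilon> N)"
proof -
  have "cauchy_tail_set g \<epsilon> N = (\<Inter>m\<in>{N..}. \<Inter>n\<in>{N..}. {x. \<bar>g m x - g n x\<bar> \<le> \<epsilon>})"
    unfolding cauchy_tail_set_def by auto
  moreover have "closed {x. \<bar>g m x - g n x\<bar> \<le> \<epsilon>}" for m n
    by (intro closed_Collect_le continuous_intros continuous_on_subset[OF assms]) auto
  ultimately show ?thesis by (simp add: closed_INT)
qed

lemma convergent_in_cauchy_tail_set:
  assumes "(\<lambda>n. g n x) \<longlonglongrightarrow> l" and "\<epsilon> > 0"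
  obtains N where "x \<in> cauchy_tail_set g \<epsilon> N"
proof -
  obtain N where "\<forall>m\<ge>N. \<forall>n\<ge>N. dist (g m x) (g n x) < \<epsilon>"
    using LIMSEQ_imp_Cauchy[OF assms(1)] \<open>\<epsilon> > 0\<close> unfolding Cauchy_def by blast
  hence "x \<in> cauchy_tail_set g \<epsilon> N"
    unfolding cauchy_tail_set_def dist_real_def by (auto intro: less_imp_le)
  thus ?thesis by (rule that)
qed

lemma limit_close_on_cauchy_tail_set:
  assumes "(\<lambda>n. g n x) \<longlonglongrightarrow> l" and "x \<in> cauchy_tail_set g \<epsilon> N"
  shows "\<bar>l - g N x\<bar> \<le> \<epsilon>"
proof (rule LIMSEQ_le_const2)
  show "(\<lambda>m. \<bar>g m x - g N x\<bar>) \<longlonglongrightarrow> \<bar>l - g N x\<bar>"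
    by (intro tendsto_intros assms(1))
  show "\<exists>M. \<forall>m\<ge>M. \<bar>g m x - g N x\<bar> \<le> \<epsilon>"
    using assms(2) unfolding cauchy_tail_set_def by blast
qed

lemma isCont_if_in_interior_cauchy_tail_sets:
  assumes cont: "\<And>n. continuous_on UNIV (g n)"
    and lim: "\<And>y. (\<lambda>n. g n y) \<longlonglongrightarrow> f y"
    and int: "\<And>\<epsilon>. \<epsilon> > 0 \<Longrightarrow> \<exists>N. x \<in> interior (cauchy_tail_set g \<epsilon> N)"
  shows "isCont f x"
  unfolding isCont_def
proof (rule tendstoI)
  fix e :: real
  assume "e > 0"
  define \<epsilon> where "\<epsilon> = e / 4"
  have "\<epsilon> > 0" using \<open>e > 0\<close> by (simp add: \<epsilon>_def)
  then obtain N where N: "x \<in> interior (cauchy_tail_set g \<epsilon> N)"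
    using int by blast
  have "\<forall>\<^sub>F y in at x. y \<in> interior (cauchy_tail_set g \<epsilon> N)"
    using N by (intro eventually_at_topological[THEN iffD2] exI[of _ "interior _"]) auto
  moreover have "\<forall>\<^sub>F y in at x. dist (g N y) (g N x) < \<epsilon>"
    using cont \<open>\<epsilon> > 0\<close> by (intro tendstoD) (simp add: continuous_on_eq_continuous_at isCont_def)
  ultimately show "\<forall>\<^sub>F y in at x. dist (f y) (f x) < e"
  proof eventually_elim
    case (elim y)
    have "\<bar>f z - g N z\<bar> \<le> \<epsilon>" if "z \<in> interior (cauchy_tail_set g \<epsilon> N)" for z
      using that interior_subset by (intro limit_close_on_cauchy_tail_set[OF lim]) blast
    hence "\<bar>f y - g N y\<bar> \<le> \<epsilon>" "\<bar>f x - g N x\<bar> \<le> \<epsilon>"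
      using elim(1) N by blast+
    thus ?case using elim(2) unfolding dist_real_def \<epsilon>_def by linarith
  qed
qed

lemma baire_class_1_continuous_on_residual:
  assumes "baire_class_1 f"
  shows "\<exists>S. residual S \<and> (\<forall>x\<in>S. isCont f x)"
proof -
  obtain g where cont: "\<And>n. continuous_on UNIV (g n)" and lim: "\<And>y. (\<lambda>n. g n y) \<longlonglongrightarrow> f y"
    using assms unfolding baire_class_1_def by blast
  define F where "F k N = cauchy_tail_set g (inverse (Suc k)) N" for k N
  define S where "S = UNIV - (\<Union>k. \<Union>N. F k N - interior (F k N))"
  have "nowhere_dense (F k N - interior (F k N))" for k N
    unfolding F_def by (intro nowhere_dense_closed_diff_interior closed_cauchy_tail_set cont)
  hence "residual S"
    unfolding residual_def S_def by (simp add: double_diff first_category_UN_pairs)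
  moreover have "isCont f x" if "x \<in> S" for x
  proof (rule isCont_if_in_interior_cauchy_tail_sets[OF cont lim])
    fix \<epsilon> :: real
    assume "\<epsilon> > 0"
    then obtain k where k: "inverse (Suc k) < \<epsilon>"
      using reals_Archimedean by blast
    have "inverse (real (Suc k)) > 0" by simp
    then obtain N where "x \<in> F k N"
      unfolding F_def by (rule convergent_in_cauchy_tail_set[OF lim])
    hence "x \<in> interior (F k N)"
      using \<open>x \<in> S\<close> unfolding S_def by blast
    moreover have "F k N \<subseteq> cauchy_tail_set g \<epsilon> N"
      using k unfolding F_def cauchy_tail_set_def by fastforce
    ultimately show "\<exists>N. x \<in> interior (cauchy_tail_set g \<epsilon> N)"
      by (meson interior_mono subsetD)
  qed
  ultimately show ?thesis by blast
qed

lemma no_upward_jump_at_isCont: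
  fixes I :: "'a::t2_space \<Rightarrow> real"
  assumes cont: "isCont I x" and adherent: "x \<in> closure X0" and "I x < \<beta>" and "\<alpha> > 0"
    and jump: "\<forall>y\<in>X0. I y < \<beta> \<longrightarrow>
                 (\<exists>xs. (\<forall>n. xs n \<in> X0) \<and> xs \<longlonglongrightarrow> y \<and>
                    liminf (\<lambda>n. ereal (I (xs n))) \<ge> ereal (I y + \<alpha>))"
  shows False
proof -
  define V where "V = {t. \<bar>t - I x\<bar> < \<alpha> / 2 \<and> t < \<beta>}"
  have "open V" unfolding V_def
    by (intro open_Collect_conj open_Collect_less continuous_intros)
  moreover have "I x \<in> V" using \<open>I x < \<beta>\<close> \<open>\<alpha> > 0\<close> by (simp add: V_def)
  ultimately obtain U where U: "open U" "x \<in> U" "\<And>z. z \<in> U \<Longrightarrow> I z \<in> V"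
    using cont unfolding continuous_at_open by metis
  obtain y where "y \<in> X0" "y \<in> U"
    using adherent U(1,2) open_Int_closure_eq_empty[of U X0] by blast
  hence "I y < \<beta>" using U(3) by (simp add: V_def)
  then obtain ys where ys: "ys \<longlonglongrightarrow> y" "liminf (\<lambda>n. ereal (I (ys n))) \<ge> ereal (I y + \<alpha>)"
    using jump \<open>y \<in> X0\<close> by blast
  have "\<forall>\<^sub>F n in sequentially. ereal (I (ys n)) \<le> ereal (I x + \<alpha> / 2)"
    using topological_tendstoD[OF ys(1) U(1) \<open>y \<in> U\<close>]
  proof eventually_elim
    case (elim n)
    hence "\<bar>I (ys n) - I x\<bar> < \<alpha> / 2" using U(3) by (simp add: V_def)
    hence "I (ys n) \<le> I x + \<alpha> / 2" by linarith
    thus ?case by simp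
  qed
  hence "liminf (\<lambda>n. ereal (I (ys n))) \<le> liminf (\<lambda>_. ereal (I x + \<alpha> / 2))"
    by (rule Liminf_mono)
  also have "\<dots> = ereal (I x + \<alpha> / 2)"
    by (simp add: Liminf_const)
  finally have "I y + \<alpha> \<le> I x + \<alpha> / 2"
    using ys(2) by (metis ereal_less_eq(3) order.trans)
  moreover have "\<bar>I y - I x\<bar> < \<alpha> / 2" using U(3) \<open>y \<in> U\<close> by (simp add: V_def)
  ultimately show False by linarith
qed

theorem lemma4p2:
  fixes I :: "'a::complete_space \<Rightarrow> real"
    and X0 :: "'a set"
  assumes nonpos: "\<And>x. I x \<le> 0"
    and baire: "baire_class_1 I"
    and ne: "X0 \<noteq> {}"
    and dense: "closure X0 = UNIV"
    and approx: "\<forall>\<beta><0. \<exists>\<alpha>>0. \<forall>x\<in>X0. I x < \<beta> \<longrightarrow>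
                 (\<exists>xs :: nat \<Rightarrow> 'a. (\<forall>n. xs n \<in> X0) \<and> xs \<longlonglongrightarrow> x \<and>
                    liminf (\<lambda>n. ereal (I (xs n))) \<ge> ereal (I x + \<alpha>))"
  shows "\<exists>S. residual S \<and> (\<forall>x\<in>S. I x = 0)"
proof -
  obtain S where "residual S" and cont: "\<forall>x\<in>S. isCont I x"
    using baire_class_1_continuous_on_residual[OF baire] by blast
  moreover have "I x = 0" if "x \<in> S" for x
  proof (rule ccontr)
    assume "I x \<noteq> 0"
    hence "I x < 0" using nonpos[of x] by linarith
    then obtain \<alpha> where "\<alpha> > 0" and jump: "\<forall>y\<in>X0. I y < I x / 2 \<longrightarrow>
                 (\<exists>xs. (\<forall>n. xs n \<in> X0) \<and> xs \<longlonglongrightarrow> y \<and>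
                    liminf (\<lambda>n. ereal (I (xs n))) \<ge> ereal (I y + \<alpha>))"
      using approx[rule_format, of "I x / 2"] by fastforce
    have "isCont I x" using cont \<open>x \<in> S\<close> by blast
    moreover have "x \<in> closure X0" using dense by simp
    moreover have "I x < I x / 2" using \<open>I x < 0\<close> by simp
    ultimately show False
      by (rule no_upward_jump_at_isCont[OF _ _ _ \<open>\<alpha> > 0\<close> jump])
  qed
  ultimately show ?thesis by blast
qed

end
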